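(* Let $N\ge 5$ and let $\mu_1,\dots,\mu_N$ be distinct real numbers. For $z\in\mathbb{C}\setminus\mathbb{R}$ define the vectors in $\mathbb{R}^N$ $$Y_1(z) := \left(\Re \frac{1}{\mu_j - z}\right)_{j=1}^N,\quad Y_2(z) := \left(\Re \frac{1}{(\mu_j - z)^2}\right)_{j=1}^N,\quad Y_3(z) := \left(\Im \frac{1}{(\mu_j - z)^2}\right)_{j=1}^N.$$ Then for every $z\in\mathbb{C}\setminus\mathbb{R}$, $Y_1(z)$ does not belong to the $\mathbb{R}$-linear span of $Y_2(z)$ and $Y_3(z)$. *)

theory Defs
  imports "HOL-Analysis.Analysis"
begin

text \<open>Vectors in R^N are represented as functions on the index set {1..N}.\<close>

definition Y1 :: "(nat \<Rightarrow> real) \<Rightarrow> complex \<Rightarrow> nat \<Rightarrow> real" where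
  "Y1 \<mu> z j = Re (1 / (complex_of_real (\<mu> j) - z))"

definition Y2 :: "(nat \<Rightarrow> real) \<Rightarrow> complex \<Rightarrow> nat \<Rightarrow> real" where
  "Y2 \<mu> z j = Re (1 / (complex_of_real (\<mu> j) - z) ^ 2)"

definition Y3 :: "(nat \<Rightarrow> real) \<Rightarrow> complex \<Rightarrow> nat \<Rightarrow> real" where
  "Y3 \<mu> z j = Im (1 / (complex_of_real (\<mu> j) - z) ^ 2)"

definition in_span2 :: "nat \<Rightarrow> (nat \<Rightarrow> real) \<Rightarrow> (nat \<Rightarrow> real) \<Rightarrow> (nat \<Rightarrow> real) \<Rightarrow> bool" where
  "in_span2 N u v w \<longleftrightarrow> (\<exists>a b :: real. \<forall>j\<in>{1..N}. u j = a * v j + b * w j)"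

end

theory Submission
  imports Defs "HOL-Computational_Algebra.Polynomial"
begin

text \<open>Clearing the denominators \<open>|w|\<^sup>2\<close> and \<open>|w|\<^sup>4\<close> turns a linear relation between
  \<open>Re (1/w)\<close>, \<open>Re (1/w\<^sup>2)\<close> and \<open>Im (1/w\<^sup>2)\<close> into a monic cubic equation for \<open>Re w\<close>
  whose coefficients depend on \<open>w\<close> only through \<open>Im w\<close>. A monic cubic has at most three
  roots, while the points \<open>\<mu>\<^sub>j - z\<close> share their imaginary part and have \<open>N > 3\<close>
  distinct real parts.\<close>

lemma
  fixes A B C :: "'a::idom"
  shows monic_cubic_roots_finite: "finite {x. x ^ 3 + A * x\<^sup>2 + B * x + C = 0}"
    and card_monic_cubic_roots_bound: "card {x. x ^ 3 + A * x\<^sup>2 + B * x + C = 0} \<le> 3"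
proof -
  let ?p = "[:C, B, A, 1:]"
  have poly_p: "poly ?p x = x ^ 3 + A * x\<^sup>2 + B * x + C" for x
    by (simp add: algebra_simps power2_eq_square power3_eq_cube)
  have roots: "{x. x ^ 3 + A * x\<^sup>2 + B * x + C = 0} = {x. poly ?p x = 0}"
    by (simp only: poly_p)
  have "?p \<noteq> 0" and "degree ?p = 3"
    by simp_all
  then show "finite {x. x ^ 3 + A * x\<^sup>2 + B * x + C = 0}"
    and "card {x. x ^ 3 + A * x\<^sup>2 + B * x + C = 0} \<le> 3"
    unfolding roots using poly_roots_finite card_poly_roots_bound by metis+
qed

lemma Re_Im_one_over_power2:
  fixes w :: complex
  shows "Re (1 / w\<^sup>2) = ((Re w)\<^sup>2 - (Im w)\<^sup>2) / ((Re w)\<^sup>2 + (Im w)\<^sup>2)\<^sup>2"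
    and "Im (1 / w\<^sup>2) = - 2 * Re w * Im w / ((Re w)\<^sup>2 + (Im w)\<^sup>2)\<^sup>2"
proof -
  have "Re (w\<^sup>2) = (Re w)\<^sup>2 - (Im w)\<^sup>2" and "Im (w\<^sup>2) = 2 * Re w * Im w"
    by (simp_all add: power2_eq_square)
  moreover have "((Re w)\<^sup>2 - (Im w)\<^sup>2)\<^sup>2 + (2 * Re w * Im w)\<^sup>2 = ((Re w)\<^sup>2 + (Im w)\<^sup>2)\<^sup>2"
    by (simp add: power2_eq_square algebra_simps)
  ultimately show "Re (1 / w\<^sup>2) = ((Re w)\<^sup>2 - (Im w)\<^sup>2) / ((Re w)\<^sup>2 + (Im w)\<^sup>2)\<^sup>2"
    and "Im (1 / w\<^sup>2) = - 2 * Re w * Im w / ((Re w)\<^sup>2 + (Im w)\<^sup>2)\<^sup>2"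
    by (simp_all add: Re_divide Im_divide)
qed

lemma Re_one_over_combination_cubic:
  fixes w :: complex and a b :: real
  assumes "w \<noteq> 0"
    and "Re (1 / w) = a * Re (1 / w\<^sup>2) + b * Im (1 / w\<^sup>2)"
  shows "(Re w) ^ 3 + (- a) * (Re w)\<^sup>2 + ((Im w)\<^sup>2 + 2 * b * Im w) * Re w + a * (Im w)\<^sup>2 = 0"
proof -
  define t s where "t = Re w" and "s = Im w"
  define n where "n = t\<^sup>2 + s\<^sup>2"
  have "n > 0"
    using assms(1) by (simp add: n_def t_def s_def complex_eq_iff sum_power2_gt_zero_iff)
  have "Re (1 / w) = t / n"
    by (simp add: Re_divide n_def t_def s_def power2_eq_square)
  have "t * n = t / n * n\<^sup>2"
    using \<open>n > 0\<close> by (simp add: power2_eq_square)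
  also have "\<dots> = (a * ((t\<^sup>2 - s\<^sup>2) / n\<^sup>2) + b * (- 2 * t * s / n\<^sup>2)) * n\<^sup>2"
    using assms(2) \<open>Re (1 / w) = t / n\<close>
    by (simp add: Re_Im_one_over_power2 n_def t_def s_def)
  also have "\<dots> = a * (t\<^sup>2 - s\<^sup>2) - 2 * b * t * s"
    using \<open>n > 0\<close> by (simp add: left_diff_distrib)
  finally have "t * n = a * (t\<^sup>2 - s\<^sup>2) - 2 * b * t * s" .
  then show ?thesis
    unfolding t_def [symmetric] s_def [symmetric] n_def
    by (simp add: algebra_simps power2_eq_square power3_eq_cube)
qed

lemma Y1_combination_cubic:
  assumes "Im z \<noteq> 0"
    and "Y1 \<mu> z j = a * Y2 \<mu> z j + b * Y3 \<mu> z j"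
  shows "(\<mu> j - Re z) ^ 3 + (- a) * (\<mu> j - Re z)\<^sup>2
      + ((Im z)\<^sup>2 - 2 * b * Im z) * (\<mu> j - Re z) + a * (Im z)\<^sup>2 = 0"
proof -
  let ?w = "complex_of_real (\<mu> j) - z"
  have "?w \<noteq> 0"
    using assms(1) by (auto simp: complex_eq_iff)
  moreover have "Re (1 / ?w) = a * Re (1 / ?w\<^sup>2) + b * Im (1 / ?w\<^sup>2)"
    using assms(2) by (simp add: Y1_def Y2_def Y3_def)
  ultimately have "(Re ?w) ^ 3 + (- a) * (Re ?w)\<^sup>2 + ((Im ?w)\<^sup>2 + 2 * b * Im ?w) * Re ?w
      + a * (Im ?w)\<^sup>2 = 0"
    by (rule Re_one_over_combination_cubic)
  then show ?thesis
    by simp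
qed

theorem lemma1p4:
  fixes N :: nat and \<mu> :: "nat \<Rightarrow> real" and z :: complex
  assumes "N \<ge> 5"
    and "inj_on \<mu> {1..N}"
    and "Im z \<noteq> 0"
  shows "\<not> in_span2 N (Y1 \<mu> z) (Y2 \<mu> z) (Y3 \<mu> z)"
proof
  assume "in_span2 N (Y1 \<mu> z) (Y2 \<mu> z) (Y3 \<mu> z)"
  then obtain a b where comb: "\<forall>j\<in>{1..N}. Y1 \<mu> z j = a * Y2 \<mu> z j + b * Y3 \<mu> z j"
    unfolding in_span2_def by blast
  define roots where
    "roots = {x. x ^ 3 + (- a) * x\<^sup>2 + ((Im z)\<^sup>2 - 2 * b * Im z) * x + a * (Im z)\<^sup>2 = 0}"
  have "\<mu> j - Re z \<in> roots" if "j \<in> {1..N}" for j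
    unfolding roots_def mem_Collect_eq using comb that
    by (intro Y1_combination_cubic[OF assms(3)]) blast
  then have image_in_roots: "(\<lambda>j. \<mu> j - Re z) ` {1..N} \<subseteq> roots"
    by blast
  have "inj_on (\<lambda>j. \<mu> j - Re z) {1..N}"
    by (intro inj_onI) (simp add: inj_on_eq_iff[OF assms(2)])
  then have "N = card ((\<lambda>j. \<mu> j - Re z) ` {1..N})"
    by (simp add: card_image)
  also have "\<dots> \<le> card roots"
    using monic_cubic_roots_finite image_in_roots unfolding roots_def by (rule card_mono)
  also have "\<dots> \<le> 3"
    unfolding roots_def by (rule card_monic_cubic_roots_bound)
  finally show False
    using assms(1) by simp
qed

end
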